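(* For every integer $n\ge 4$, $d(C_n)<h(n)$, where $$h(n)=\begin{cases}2^{n-1}+(n+9)\cdot 2^{\frac{n-7}{2}}, & n\text{ odd},\\ 2^{n-1}+(n+12)\cdot 2^{\frac{n-8}{2}}, & n \text{ even},\ n\neq 6,\\ 42, & n=6.\end{cases}$$
   Context: All graphs are finite, simple and undirected. A subset $D\subseteq V(G)$ is a dissociation set of $G$ if the induced subgraph $G[D]$ has maximum degree at most $1$; the empty set is a dissociation set. $d(G)$ denotes the total number of dissociation sets of $G$, including the empty set. $C_n$ denotes the cycle on $n$ vertices. *)

theory Defs
  imports Main Complex_Main
begin

text \<open>A finite simple graph is given by a vertex set V and a symmetric irreflexive
adjacency relation E (only its restriction to V matters).\<close>

definition dissociation_set :: "'a set \<Rightarrow> ('a \<Rightarrow> 'a \<Rightarrow> bool) \<Rightarrow> 'a set \<Rightarrow> bool" where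
  "dissociation_set V E D \<longleftrightarrow> D \<subseteq> V \<and> (\<forall>v\<in>D. card {u\<in>D. E v u} \<le> 1)"

definition num_dissociation_sets :: "'a set \<Rightarrow> ('a \<Rightarrow> 'a \<Rightarrow> bool) \<Rightarrow> nat" where
  "num_dissociation_sets V E = card {D. dissociation_set V E D}"

definition cycle_verts :: "nat \<Rightarrow> nat set" where
  "cycle_verts n = {0..<n}"

definition cycle_adj :: "nat \<Rightarrow> nat \<Rightarrow> nat \<Rightarrow> bool" where
  "cycle_adj n i j \<longleftrightarrow> i < n \<and> j < n \<and> i \<noteq> j \<and> (j = (i + 1) mod n \<or> i = (j + 1) mod n)"

definition h_bound :: "nat \<Rightarrow> real" where
  "h_bound n =
    (if odd n then 2 ^ (n - 1) + (real n + 9) * 2 powr ((real n - 7) / 2)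
     else if n = 6 then 42
     else 2 ^ (n - 1) + (real n + 12) * 2 powr ((real n - 8) / 2))"

end

theory Submission
  imports Defs
begin

text \<open>A set of vertices of C_n is a dissociation set iff its characteristic word, read
cyclically, contains no three consecutive ones. Read linearly, the number of words of length n
without three consecutive ones is submultiplicative in n, and exactly 44 of the 64 words of
length 6 qualify; hence for n \<ge> 12 we get
d(C_n) \<le> 44^2 * 2^(n-12) < 2^11 * 2^(n-12) = 2^(n-1) \<le> h(n).
The cases 4 \<le> n \<le> 11 are settled by computing d(C_n).\<close>

fun triple_free :: "bool list \<Rightarrow> bool" where
  "triple_free (a # b # c # w) \<longleftrightarrow> \<not> (a \<and> b \<and> c) \<and> triple_free (b # c # w)"
| "triple_free _ \<longleftrightarrow> True"

lemma triple_free_iff_nth: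
  "triple_free w \<longleftrightarrow> (\<forall>i. i + 2 < length w \<longrightarrow> \<not> (w ! i \<and> w ! (i + 1) \<and> w ! (i + 2)))"
proof (induction w rule: triple_free.induct)
  case (1 a b c w)
  have shift: "(\<forall>i. P i) \<longleftrightarrow> P 0 \<and> (\<forall>i. P (Suc i))" for P :: "nat \<Rightarrow> bool"
    by (metis not0_implies_Suc)
  show ?case
    by (simp only: shift[where P = "\<lambda>i. i + 2 < length (a # b # c # w) \<longrightarrow> _ i"]) (simp add: 1)
qed auto

lemma triple_free_appendD:
  assumes "triple_free (u @ v)"
  shows "triple_free u" "triple_free v"
proof -
  have window: "\<not> ((u @ v) ! i \<and> (u @ v) ! (i + 1) \<and> (u @ v) ! (i + 2))"
    if "i + 2 < length u + length v" for i
    using assms that by (simp add: triple_free_iff_nth)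
  show "triple_free u"
    unfolding triple_free_iff_nth
  proof (intro allI impI)
    fix i assume "i + 2 < length u"
    then show "\<not> (u ! i \<and> u ! (i + 1) \<and> u ! (i + 2))"
      using window[of i] by (simp add: nth_append)
  qed
  show "triple_free v"
    unfolding triple_free_iff_nth
  proof (intro allI impI)
    fix i assume "i + 2 < length v"
    then show "\<not> (v ! i \<and> v ! (i + 1) \<and> v ! (i + 2))"
      using window[of "length u + i"] by (simp add: nth_append)
  qed
qed

definition cyclic_pad :: "'a list \<Rightarrow> 'a list" where
  "cyclic_pad w = last w # w @ [hd w]"

definition cyclically_triple_free :: "bool list \<Rightarrow> bool" where
  "cyclically_triple_free w \<longleftrightarrow> triple_free (cyclic_pad w)"

lemma nth_cyclic_pad:
  assumes "length w = n" "n \<ge> 1" "i \<le> n + 1"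
  shows "cyclic_pad w ! i = w ! ((i + n - 1) mod n)"
proof -
  have "w \<noteq> []"
    using assms by auto
  consider "i = 0" | "i = n + 1" | "1 \<le> i" "i \<le> n"
    using assms(3) by linarith
  then show ?thesis
  proof cases
    case 1
    then show ?thesis
      using assms \<open>w \<noteq> []\<close> by (simp add: cyclic_pad_def last_conv_nth)
  next
    case 2
    then have "(i + n - 1) mod n = 0"
      by simp
    then show ?thesis
      using assms 2 \<open>w \<noteq> []\<close> by (simp add: cyclic_pad_def hd_conv_nth nth_append)
  next
    case 3
    then have "(i + n - 1) mod n = i - 1"
      by (simp add: le_mod_geq)
    moreover have "cyclic_pad w ! i = (w @ [hd w]) ! (i - 1)"
      using 3 by (cases i) (auto simp: cyclic_pad_def)
    ultimately show ?thesis
      using assms 3 by (auto simp: nth_append)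
  qed
qed

lemma cyclically_triple_free_iff_nth:
  assumes "length w = n" "n \<ge> 1"
  shows "cyclically_triple_free w \<longleftrightarrow>
    (\<forall>v<n. \<not> (w ! ((v + n - 1) mod n) \<and> w ! v \<and> w ! ((v + 1) mod n)))"
proof -
  have "length (cyclic_pad w) = n + 2"
    using assms by (simp add: cyclic_pad_def)
  then have "cyclically_triple_free w \<longleftrightarrow>
      (\<forall>v<n. \<not> (cyclic_pad w ! v \<and> cyclic_pad w ! (v + 1) \<and> cyclic_pad w ! (v + 2)))"
    unfolding cyclically_triple_free_def triple_free_iff_nth by simp
  moreover have "cyclic_pad w ! v = w ! ((v + n - 1) mod n)" "cyclic_pad w ! (v + 1) = w ! v"
    "cyclic_pad w ! (v + 2) = w ! ((v + 1) mod n)" if "v < n" for v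
    using nth_cyclic_pad[OF assms, of v] nth_cyclic_pad[OF assms, of "v + 1"]
      nth_cyclic_pad[OF assms, of "v + 2"] mod_add_self2[of "v + 1" n] that assms
    by simp_all
  ultimately show ?thesis
    by simp
qed

lemma cyclically_triple_free_imp_triple_free:
  "cyclically_triple_free w \<Longrightarrow> triple_free w"
  using triple_free_appendD[of "[last w]" "w @ [hd w]"] triple_free_appendD[of w "[hd w]"]
  unfolding cyclically_triple_free_def cyclic_pad_def by simp

lemma finite_words: "finite {w :: 'a :: finite list. length w = n \<and> P w}"
  by (rule finite_subset[OF _ finite_lists_length_eq[of UNIV n]]) auto

lemma card_words_Suc:
  "card {w. length w = Suc k \<and> P w} =
    card {w. length w = k \<and> P (True # w)} + card {w. length w = k \<and> P (False # w)}"
proof -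
  let ?W = "\<lambda>b. {w. length w = k \<and> P (b # w)}"
  have split: "{w. length w = Suc k \<and> P w} = Cons True ` ?W True \<union> Cons False ` ?W False"
  proof (intro equalityI subsetI)
    fix w assume "w \<in> {w. length w = Suc k \<and> P w}"
    then obtain b v where "w = b # v" "length v = k" "P (b # v)"
      by (auto simp: length_Suc_conv)
    then show "w \<in> Cons True ` ?W True \<union> Cons False ` ?W False"
      by (cases b) auto
  qed auto
  have "card {w. length w = Suc k \<and> P w} = card (Cons True ` ?W True) + card (Cons False ` ?W False)"
    unfolding split by (rule card_Un_disjoint) (auto intro: finite_words)
  also have "\<dots> = card (?W True) + card (?W False)"
    by (simp add: card_image)
  finally show ?thesis .
qed

fun count_words :: "(bool list \<Rightarrow> bool) \<Rightarrow> nat \<Rightarrow> nat" where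
  "count_words P 0 = (if P [] then 1 else 0)"
| "count_words P (Suc k) = count_words (\<lambda>w. P (True # w)) k + count_words (\<lambda>w. P (False # w)) k"

lemma count_words_eq_card: "count_words P k = card {w. length w = k \<and> P w}"
proof (induction k arbitrary: P)
  case 0
  have "{w. length w = 0 \<and> P w} = (if P [] then {[]} else {})"
    by auto
  then show ?case
    by simp
next
  case (Suc k)
  then show ?case
    by (simp add: card_words_Suc)
qed

definition num_triple_free :: "nat \<Rightarrow> nat" where
  "num_triple_free n = card {w. length w = n \<and> triple_free w}"

lemma num_triple_free_le_power: "num_triple_free n \<le> 2 ^ n"
proof -
  have "num_triple_free n \<le> card {w :: bool list. set w \<subseteq> UNIV \<and> length w = n}"
    unfolding num_triple_free_def by (rule card_mono[OF finite_lists_length_eq]) auto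
  then show ?thesis
    using card_lists_length_eq[of "UNIV :: bool set" n] by simp
qed

lemma num_triple_free_add_le: "num_triple_free (m + k) \<le> num_triple_free m * num_triple_free k"
proof -
  let ?T = "\<lambda>n. {w. length w = n \<and> triple_free w}"
  have finite_product: "finite (?T m \<times> ?T k)"
    by (intro finite_cartesian_product finite_words)
  have "?T (m + k) \<subseteq> (\<lambda>(u, v). u @ v) ` (?T m \<times> ?T k)"
  proof
    fix w assume w: "w \<in> ?T (m + k)"
    then have "triple_free (take m w)" "triple_free (drop m w)"
      using triple_free_appendD[of "take m w" "drop m w"] by auto
    with w show "w \<in> (\<lambda>(u, v). u @ v) ` (?T m \<times> ?T k)"
      by (intro image_eqI[of _ _ "(take m w, drop m w)"]) auto
  qed
  then have "card (?T (m + k)) \<le> card ((\<lambda>(u, v). u @ v) ` (?T m \<times> ?T k))"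
    using finite_product by (intro card_mono finite_imageI)
  also have "\<dots> \<le> card (?T m \<times> ?T k)"
    using finite_product by (rule card_image_le)
  finally show ?thesis
    unfolding num_triple_free_def by (simp add: card_cartesian_product)
qed

lemma num_triple_free_6: "num_triple_free 6 = 44"
  unfolding num_triple_free_def count_words_eq_card[symmetric] by code_simp

lemma cycle_adj_iff:
  assumes "n \<ge> 3" "v < n" "u < n"
  shows "cycle_adj n v u \<longleftrightarrow> u = (v + 1) mod n \<or> u = (v + n - 1) mod n"
proof -
  have "v = (u + 1) mod n \<longleftrightarrow> u = (v + n - 1) mod n"
    using assms by (cases "u + 1 = n"; cases "v = 0") (auto simp: mod_if)
  moreover have "(v + 1) mod n \<noteq> v" "(v + n - 1) mod n \<noteq> v"
    using assms by (auto simp: mod_if)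
  ultimately show ?thesis
    unfolding cycle_adj_def using assms by auto
qed

lemma dissociation_set_cycle_iff:
  assumes "n \<ge> 3"
  shows "dissociation_set (cycle_verts n) (cycle_adj n) D \<longleftrightarrow>
    D \<subseteq> {..<n} \<and> (\<forall>v<n. \<not> ((v + n - 1) mod n \<in> D \<and> v \<in> D \<and> (v + 1) mod n \<in> D))"
proof (cases "D \<subseteq> {..<n}")
  case True
  have "card {u\<in>D. cycle_adj n v u} \<le> 1 \<longleftrightarrow> \<not> ((v + n - 1) mod n \<in> D \<and> (v + 1) mod n \<in> D)"
    if "v < n" for v
  proof -
    have neighbours: "{u\<in>D. cycle_adj n v u} = D \<inter> {(v + 1) mod n, (v + n - 1) mod n}"
      using True cycle_adj_iff[OF assms that] by auto
    have "(v + 1) mod n \<noteq> (v + n - 1) mod n"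
      using assms that by (auto simp: mod_if)
    then show ?thesis
      unfolding neighbours by (cases "(v + 1) mod n \<in> D"; cases "(v + n - 1) mod n \<in> D") auto
  qed
  then show ?thesis
    using True unfolding dissociation_set_def cycle_verts_def by auto
next
  case False
  then show ?thesis
    unfolding dissociation_set_def cycle_verts_def by auto
qed

lemma num_dissociation_sets_cycle:
  assumes "n \<ge> 3"
  shows "num_dissociation_sets (cycle_verts n) (cycle_adj n) =
    card {w. length w = n \<and> cyclically_triple_free w}"
proof -
  let ?char = "\<lambda>D. map (\<lambda>i. i \<in> D) [0..<n]"
  let ?support = "\<lambda>w. {i. i < n \<and> w ! i}"
  have "bij_betw ?char {D. dissociation_set (cycle_verts n) (cycle_adj n) D}
      {w. length w = n \<and> cyclically_triple_free w}"
    by (rule bij_betw_byWitness[where f' = ?support])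
      (use assms in \<open>auto simp: dissociation_set_cycle_iff cyclically_triple_free_iff_nth
        intro: nth_equalityI\<close>)
  then show ?thesis
    unfolding num_dissociation_sets_def by (rule bij_betw_same_card)
qed

lemma num_dissociation_sets_cycle_eq_count_words:
  "n \<ge> 3 \<Longrightarrow> num_dissociation_sets (cycle_verts n) (cycle_adj n) =
    count_words cyclically_triple_free n"
  by (simp add: num_dissociation_sets_cycle count_words_eq_card)

lemma num_dissociation_sets_cycle_le_num_triple_free:
  assumes "n \<ge> 3"
  shows "num_dissociation_sets (cycle_verts n) (cycle_adj n) \<le> num_triple_free n"
  unfolding num_dissociation_sets_cycle[OF assms] num_triple_free_def
  by (intro card_mono finite_words) (auto intro: cyclically_triple_free_imp_triple_free)

lemma num_dissociation_sets_cycle_lt_power: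
  assumes "n \<ge> 12"
  shows "num_dissociation_sets (cycle_verts n) (cycle_adj n) < 2 ^ (n - 1)"
proof -
  have "num_dissociation_sets (cycle_verts n) (cycle_adj n) \<le> num_triple_free (6 + (6 + (n - 12)))"
    using num_dissociation_sets_cycle_le_num_triple_free assms by simp
  also have "\<dots> \<le> num_triple_free 6 * (num_triple_free 6 * num_triple_free (n - 12))"
    by (meson num_triple_free_add_le mult_le_mono2 order_trans)
  also have "\<dots> \<le> 44 * (44 * 2 ^ (n - 12))"
    using num_triple_free_le_power by (simp add: num_triple_free_6)
  also have "\<dots> < 2 ^ 11 * 2 ^ (n - 12)"
    by simp
  also have "\<dots> = 2 ^ (n - 1)"
    by (subst power_add[symmetric]) (use assms in simp)
  finally show ?thesis .
qed

lemma num_dissociation_sets_small_cycles: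
  "num_dissociation_sets (cycle_verts 4) (cycle_adj 4) = 11"
  "num_dissociation_sets (cycle_verts 5) (cycle_adj 5) = 21"
  "num_dissociation_sets (cycle_verts 6) (cycle_adj 6) = 39"
  "num_dissociation_sets (cycle_verts 7) (cycle_adj 7) = 71"
  "num_dissociation_sets (cycle_verts 8) (cycle_adj 8) = 131"
  "num_dissociation_sets (cycle_verts 9) (cycle_adj 9) = 241"
  "num_dissociation_sets (cycle_verts 10) (cycle_adj 10) = 443"
  "num_dissociation_sets (cycle_verts 11) (cycle_adj 11) = 815"
  by (rule num_dissociation_sets_cycle_eq_count_words[THEN trans]; code_simp)+

lemma power_le_h_bound: "n \<noteq> 6 \<Longrightarrow> 2 ^ (n - 1) \<le> h_bound n"
  by (simp add: h_bound_def)

lemma h_bound_small: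
  "h_bound 4 = 12" "h_bound 5 = 23" "h_bound 6 = 42" "h_bound 7 = 80" "h_bound 8 = 148"
  by (simp_all add: h_bound_def powr_minus)

theorem lemma4p1:
  fixes n :: nat
  assumes "n \<ge> 4"
  shows "real (num_dissociation_sets (cycle_verts n) (cycle_adj n)) < h_bound n"
proof (cases "n \<ge> 12")
  case True
  then have "real (num_dissociation_sets (cycle_verts n) (cycle_adj n)) < 2 ^ (n - 1)"
    using num_dissociation_sets_cycle_lt_power by simp
  also have "\<dots> \<le> h_bound n"
    using True by (intro power_le_h_bound) simp
  finally show ?thesis .
next
  case False
  with assms have "n \<in> {4, 5, 6, 7, 8, 9, 10, 11}"
    by auto
  then show ?thesis
    using power_le_h_bound[of 9] power_le_h_bound[of 10] power_le_h_bound[of 11]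
    by (elim insertE emptyE) (simp_all add: num_dissociation_sets_small_cycles h_bound_small)
qed

end
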